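(* There are constants $c,C>0$ such that for all $n\ge2$ and all $j\le n$, $c\,n\le\mu(D_n,z_j,e_j)\le C\,n$, i.e. $\mu(D_n,z_j,e_j)=\Theta(n)$.
   Context: For $n\ge2$ let $k=\lceil\sqrt n\rceil-1$ and $S_k=\{(-1+\frac{2p}{k})+i(-1+\frac{2q}{k}):0\le p,q\le k\}\subset\mathbb{C}$. $D_n$ is the diagonal matrix whose diagonal entries $z_1,\dots,z_n$ are the first $n$ elements of $S_k$ in lexicographic order; $e_j$ are the standard basis vectors. For $v\ne0$, $T_v=v^\perp\subset\mathbb{C}^n$, $P_{v^\perp}$ the orthogonal projection onto $T_v$, $A_{\lambda,v}=P_{v^\perp}(A-\lambda\mathrm{Id})|_{T_v}$, and $\mu(A,\lambda,v)=\|A\|_F\|A_{\lambda,v}^{-1}\|$ (Frobenius norm times operator norm; $\infty$ if not invertible). *)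

theory Defs
  imports Complex_Main "HOL-Library.Extended_Real"
begin

(* Vectors in C^n: functions nat => complex, coordinates 0..n-1 (zero outside).
   Matrices: nat => nat => complex, entries (i,j) with i,j < n. *)

definition cvecs :: "nat \<Rightarrow> (nat \<Rightarrow> complex) set" where
  "cvecs n = {x. \<forall>i\<ge>n. x i = 0}"

definition cinner :: "nat \<Rightarrow> (nat \<Rightarrow> complex) \<Rightarrow> (nat \<Rightarrow> complex) \<Rightarrow> complex" where
  "cinner n x y = (\<Sum>i<n. x i * cnj (y i))"

definition vnorm :: "nat \<Rightarrow> (nat \<Rightarrow> complex) \<Rightarrow> real" where
  "vnorm n x = sqrt (\<Sum>i<n. (cmod (x i))\<^sup>2)"

definition frob :: "nat \<Rightarrow> (nat \<Rightarrow> nat \<Rightarrow> complex) \<Rightarrow> real" where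
  "frob n A = sqrt (\<Sum>i<n. \<Sum>j<n. (cmod (A i j))\<^sup>2)"

definition matvec :: "nat \<Rightarrow> (nat \<Rightarrow> nat \<Rightarrow> complex) \<Rightarrow> (nat \<Rightarrow> complex) \<Rightarrow> (nat \<Rightarrow> complex)" where
  "matvec n A x = (\<lambda>i. if i < n then (\<Sum>j<n. A i j * x j) else 0)"

definition shiftmat :: "nat \<Rightarrow> (nat \<Rightarrow> nat \<Rightarrow> complex) \<Rightarrow> complex \<Rightarrow> (nat \<Rightarrow> nat \<Rightarrow> complex)" where
  "shiftmat n A lam = (\<lambda>i j. A i j - (if i = j \<and> i < n then lam else 0))"

definition Tperp :: "nat \<Rightarrow> (nat \<Rightarrow> complex) \<Rightarrow> (nat \<Rightarrow> complex) set" where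
  "Tperp n v = {x \<in> cvecs n. cinner n x v = 0}"

definition projperp :: "nat \<Rightarrow> (nat \<Rightarrow> complex) \<Rightarrow> (nat \<Rightarrow> complex) \<Rightarrow> (nat \<Rightarrow> complex)" where
  "projperp n v x = (\<lambda>i. if i < n then x i - (cinner n x v / cinner n v v) * v i else 0)"

definition Aop :: "nat \<Rightarrow> (nat \<Rightarrow> nat \<Rightarrow> complex) \<Rightarrow> complex \<Rightarrow> (nat \<Rightarrow> complex) \<Rightarrow> (nat \<Rightarrow> complex) \<Rightarrow> (nat \<Rightarrow> complex)" where
  "Aop n A lam v = (\<lambda>x. projperp n v (matvec n (shiftmat n A lam) x))"

definition mu :: "nat \<Rightarrow> (nat \<Rightarrow> nat \<Rightarrow> complex) \<Rightarrow> complex \<Rightarrow> (nat \<Rightarrow> complex) \<Rightarrow> ereal" where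
  "mu n A lam v =
    (if bij_betw (Aop n A lam v) (Tperp n v) (Tperp n v)
     then ereal (frob n A * Sup {vnorm n (inv_into (Tperp n v) (Aop n A lam v) y) | y.
                                   y \<in> Tperp n v \<and> vnorm n y = 1})
     else \<infinity>)"

definition kk :: "nat \<Rightarrow> nat" where
  "kk n = nat \<lceil>sqrt (real n)\<rceil> - 1"

definition Sgrid :: "nat \<Rightarrow> complex set" where
  "Sgrid k = {Complex (-1 + 2 * real p / real k) (-1 + 2 * real q / real k) | p q. p \<le> k \<and> q \<le> k}"

definition lexless :: "complex \<Rightarrow> complex \<Rightarrow> bool" where
  "lexless z w \<longleftrightarrow> Re z < Re w \<or> (Re z = Re w \<and> Im z < Im w)"

definition Slist :: "nat \<Rightarrow> complex list" where
  "Slist k = (THE xs. sorted_wrt lexless xs \<and> set xs = Sgrid k)"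

text \<open>z n i (0-based, i < n) is the (i+1)-th element of S_k, k = kk n\<close>
definition zz :: "nat \<Rightarrow> nat \<Rightarrow> complex" where
  "zz n i = Slist (kk n) ! i"

definition Dmat :: "nat \<Rightarrow> (nat \<Rightarrow> nat \<Rightarrow> complex)" where
  "Dmat n = (\<lambda>i j. if i = j \<and> i < n then zz n i else 0)"

definition ebasis :: "nat \<Rightarrow> (nat \<Rightarrow> complex)" where
  "ebasis j = (\<lambda>i. if i = j then 1 else 0)"

end

theory Submission
  imports Defs "HOL-Library.Product_Lexorder"
begin

text \<open>
  For a diagonal matrix with eigenvalues \<open>z i\<close>, the operator \<open>A\<close> at \<open>\<lambda> = z j\<close>, \<open>v = e j\<close> is the
  diagonal operator with entries \<open>z i - z j\<close> (\<open>i \<noteq> j\<close>) on the orthogonal complement of \<open>e j\<close>,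
  so the norm of its inverse is the reciprocal of the distance from \<open>z j\<close> to the nearest other
  eigenvalue. On the grid \<open>S k\<close> this distance is the mesh \<open>2/k\<close>, attained by a horizontal or
  vertical neighbour, and \<open>k\<close> is about \<open>sqrt n\<close>. The Frobenius norm is of order \<open>sqrt n\<close>:
  every grid point has modulus at most \<open>sqrt 2\<close>, and a fixed fraction of the first \<open>n\<close> points
  lie in the strip \<open>Re z \<le> -1/2\<close>. Hence \<open>\<mu>\<close> is of order \<open>sqrt n \<cdot> k/2\<close>, i.e. of order \<open>n\<close>.
\<close>

definition diag_mat :: "nat \<Rightarrow> (nat \<Rightarrow> complex) \<Rightarrow> nat \<Rightarrow> nat \<Rightarrow> complex" where
  "diag_mat n z = (\<lambda>i j. if i = j \<and> i < n then z i else 0)"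

lemma cinner_ebasis: "j < n \<Longrightarrow> cinner n x (ebasis j) = x j"
  by (simp add: cinner_def ebasis_def if_distrib cong: if_cong)

lemma Tperp_ebasis: "j < n \<Longrightarrow> Tperp n (ebasis j) = {x \<in> cvecs n. x j = 0}"
  by (simp add: Tperp_def cinner_ebasis)

lemma Aop_diag_mat:
  assumes "j < n"
  shows "Aop n (diag_mat n z) (z j) (ebasis j) x = (\<lambda>i. if i < n then (z i - z j) * x i else 0)"
proof -
  have mv: "matvec n (shiftmat n (diag_mat n z) (z j)) x = (\<lambda>i. if i < n then (z i - z j) * x i else 0)"
  proof
    fix i
    have "i < n \<Longrightarrow> (\<Sum>l<n. shiftmat n (diag_mat n z) (z j) i l * x l)
        = (\<Sum>l<n. if l = i then (z i - z j) * x i else 0)"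
      by (rule sum.cong) (auto simp: shiftmat_def diag_mat_def)
    then show "matvec n (shiftmat n (diag_mat n z) (z j)) x i = (if i < n then (z i - z j) * x i else 0)"
      by (simp add: matvec_def)
  qed
  show ?thesis
    unfolding Aop_def projperp_def mv cinner_ebasis[OF assms] by (auto simp: ebasis_def)
qed

lemma frob_diag_mat: "frob n (diag_mat n z) = sqrt (\<Sum>i<n. (cmod (z i))\<^sup>2)"
proof -
  have "(\<Sum>j<n. (cmod (diag_mat n z i j))\<^sup>2) = (cmod (z i))\<^sup>2" if "i < n" for i
  proof -
    have "(\<Sum>j<n. (cmod (diag_mat n z i j))\<^sup>2) = (\<Sum>j<n. if j = i then (cmod (z i))\<^sup>2 else 0)"
      by (rule sum.cong) (auto simp: diag_mat_def)
    then show ?thesis using that by simp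
  qed
  then show ?thesis unfolding frob_def by (intro arg_cong[where f = sqrt] sum.cong) auto
qed

lemma vnorm_le_if_coordinatewise_le:
  assumes "c \<ge> 0" "\<And>i. i < n \<Longrightarrow> cmod (x i) \<le> c * cmod (y i)"
  shows "vnorm n x \<le> c * vnorm n y"
proof -
  have "(\<Sum>i<n. (cmod (x i))\<^sup>2) \<le> (\<Sum>i<n. c\<^sup>2 * (cmod (y i))\<^sup>2)"
  proof (rule sum_mono)
    fix i assume "i \<in> {..<n}"
    then have "(cmod (x i))\<^sup>2 \<le> (c * cmod (y i))\<^sup>2"
      using assms(2) by (intro power_mono) auto
    then show "(cmod (x i))\<^sup>2 \<le> c\<^sup>2 * (cmod (y i))\<^sup>2"
      by (simp add: power_mult_distrib)
  qed
  then have "vnorm n x \<le> sqrt (c\<^sup>2 * (\<Sum>i<n. (cmod (y i))\<^sup>2))"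
    unfolding vnorm_def by (simp add: sum_distrib_left)
  then show ?thesis using assms(1) by (simp add: vnorm_def real_sqrt_mult)
qed

lemma vnorm_single: "i < n \<Longrightarrow> vnorm n (\<lambda>l. if l = i then c else 0) = cmod c"
proof -
  assume "i < n"
  have "(\<Sum>l<n. (cmod (if l = i then c else 0))\<^sup>2) = (\<Sum>l<n. if l = i then (cmod c)\<^sup>2 else 0)"
    by (rule sum.cong) auto
  then have "(\<Sum>l<n. (cmod (if l = i then c else 0))\<^sup>2) = (cmod c)\<^sup>2"
    using \<open>i < n\<close> by simp
  then show ?thesis by (simp add: vnorm_def)
qed

lemma Aop_diag_mat_inverse:
  assumes j: "j < n" and distinct: "\<forall>i<n. i \<noteq> j \<longrightarrow> z i \<noteq> z j"
  defines "A \<equiv> Aop n (diag_mat n z) (z j) (ebasis j)" and "T \<equiv> Tperp n (ebasis j)"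
  shows "bij_betw A T T"
    and "y \<in> T \<Longrightarrow> inv_into T A y = (\<lambda>i. if i < n \<and> i \<noteq> j then y i / (z i - z j) else 0)"
proof -
  define g where "g = (\<lambda>y i. if i < n \<and> i \<noteq> j then y i / (z i - z j) else 0)"
  have A: "A x = (\<lambda>i. if i < n then (z i - z j) * x i else 0)" for x
    unfolding A_def by (rule Aop_diag_mat[OF j, of z])
  have T: "T = {x \<in> cvecs n. x j = 0}"
    unfolding T_def using Tperp_ebasis[OF j] .
  have AT: "A x \<in> T" and gT: "g x \<in> T" for x
    using j by (simp_all add: A T g_def cvecs_def)
  have gA: "g (A x) = x" and Ag: "A (g x) = x" if "x \<in> T" for x
  proof (rule_tac [!] ext)
    fix i
    show "g (A x) i = x i" "A (g x) i = x i"
      using that distinct by (auto simp: A T g_def cvecs_def)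
  qed
  show bij: "bij_betw A T T"
    by (rule bij_betw_byWitness[of T g]) (use AT gT gA Ag in auto)
  assume "y \<in> T"
  then have "inv_into T A y = g y"
    using bij_betw_imp_inj_on[OF bij] gT Ag by (simp add: inv_into_f_eq)
  then show "inv_into T A y = (\<lambda>i. if i < n \<and> i \<noteq> j then y i / (z i - z j) else 0)"
    by (simp add: g_def)
qed

lemma mu_diag_mat:
  assumes j: "j < n" and d: "d > 0"
    and sep: "\<And>i. i < n \<Longrightarrow> i \<noteq> j \<Longrightarrow> d \<le> dist (z i) (z j)"
    and nb: "i0 < n" "i0 \<noteq> j" "dist (z i0) (z j) = d"
  shows "mu n (diag_mat n z) (z j) (ebasis j) = ereal (frob n (diag_mat n z) / d)"
proof -
  define A where "A = Aop n (diag_mat n z) (z j) (ebasis j)"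
  define T where "T = Tperp n (ebasis j)"
  define g where "g = (\<lambda>y i. if i < n \<and> i \<noteq> j then y i / (z i - z j) else 0)"
  have distinct: "\<forall>i<n. i \<noteq> j \<longrightarrow> z i \<noteq> z j"
    using sep d by fastforce
  note inverse = Aop_diag_mat_inverse[of j n z, OF j distinct, folded A_def T_def]
  have inv_g: "inv_into T A y = g y" if "y \<in> T" for y
    using inverse(2)[OF that] by (simp add: g_def)
  have T: "T = {x \<in> cvecs n. x j = 0}"
    unfolding T_def using Tperp_ebasis[OF j] .
  define F where "F = {vnorm n (inv_into T A y) | y. y \<in> T \<and> vnorm n y = 1}"
  have "vnorm n (g y) \<le> 1 / d" if "y \<in> T" "vnorm n y = 1" for y
  proof -
    have "cmod (g y i) \<le> 1 / d * cmod (y i)" if "i < n" for i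
    proof (cases "i = j")
      case False
      then have "cmod (g y i) = cmod (y i) / dist (z i) (z j)"
        using \<open>i < n\<close> by (simp add: g_def norm_divide dist_norm)
      also have "\<dots> \<le> cmod (y i) / d"
        using sep[OF \<open>i < n\<close> False] d by (intro divide_left_mono mult_pos_pos) auto
      finally show ?thesis by simp
    qed (use d in \<open>simp add: g_def\<close>)
    then have "vnorm n (g y) \<le> 1 / d * vnorm n y"
      using d by (intro vnorm_le_if_coordinatewise_le) auto
    then show ?thesis using that(2) by simp
  qed
  then have upper: "v \<le> 1 / d" if "v \<in> F" for v
    using that inv_g unfolding F_def by auto
  have "ebasis i0 \<in> T"
    using nb by (simp add: T cvecs_def ebasis_def)
  moreover have "vnorm n (ebasis i0) = 1"
    using vnorm_single[OF nb(1), of 1] by (simp add: ebasis_def)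
  moreover have "g (ebasis i0) = (\<lambda>l. if l = i0 then 1 / (z i0 - z j) else 0)"
  proof
    fix l show "g (ebasis i0) l = (if l = i0 then 1 / (z i0 - z j) else 0)"
      using nb by (simp add: g_def ebasis_def)
  qed
  then have "vnorm n (g (ebasis i0)) = 1 / d"
    using vnorm_single[OF nb(1)] nb(3) by (simp add: norm_divide dist_norm)
  ultimately have "1 / d \<in> F"
    unfolding F_def using inv_g by (metis (mono_tags, lifting) mem_Collect_eq)
  then have "Sup F = 1 / d"
    using upper by (rule cSup_eq_maximum)
  then show ?thesis
    using inverse(1) by (simp add: mu_def A_def T_def F_def)
qed

definition grid_point :: "nat \<Rightarrow> nat \<Rightarrow> nat \<Rightarrow> complex" where
  "grid_point k p q = Complex (-1 + 2 * real p / real k) (-1 + 2 * real q / real k)"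

text \<open>Row-major enumeration \<open>p(k+1) + q \<mapsto> (p, q)\<close>; as the real part is the primary key of
  \<open>lexless\<close>, this lists \<open>S\<^sub>k\<close> in lexicographic order.\<close>

definition grid_list :: "nat \<Rightarrow> complex list" where
  "grid_list k = map (\<lambda>i. grid_point k (i div (k+1)) (i mod (k+1))) [0..<(k+1)*(k+1)]"

lemma lexless_iff_pair_less: "lexless z w \<longleftrightarrow> (Re z, Im z) < (Re w, Im w)"
  by (auto simp: lexless_def)

lemma sorted_lexless_unique:
  assumes "sorted_wrt lexless xs" "sorted_wrt lexless ys" "set xs = set ys"
  shows "xs = ys"
proof -
  let ?f = "\<lambda>z::complex. (Re z, Im z)"
  have "inj ?f" by (auto simp: inj_def complex_eq_iff)
  moreover have "sorted_wrt (<) (map ?f xs)" "sorted_wrt (<) (map ?f ys)"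
    using assms(1,2) by (simp_all add: sorted_wrt_map lexless_iff_pair_less[abs_def])
  then have "map ?f ys = map ?f xs"
    by (rule strict_sorted_equal) (simp add: assms(3))
  ultimately show ?thesis by simp
qed

lemma mult_add_div_mod_eq:
  fixes p q k :: nat
  assumes "q \<le> k"
  shows "(p*(k+1)+q) div (k+1) = p" "(p*(k+1)+q) mod (k+1) = q"
proof -
  have "p*(k+1)+q = q + (k+1)*p" by simp
  then show "(p*(k+1)+q) div (k+1) = p" "(p*(k+1)+q) mod (k+1) = q"
    using assms by (simp_all only: div_mult_self2 mod_mult_self2) auto
qed

lemma sorted_grid_list:
  assumes "k \<ge> 1"
  shows "sorted_wrt lexless (grid_list k)"
  unfolding grid_list_def sorted_wrt_map
proof (rule sorted_wrt_mono_rel[OF _ sorted_wrt_upt])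
  fix i i' assume "i \<in> set [0..<(k+1)*(k+1)]" "i' \<in> set [0..<(k+1)*(k+1)]" "i < i'"
  then have ii: "i < i'" by simp
  let ?p = "i div (k+1)" and ?p' = "i' div (k+1)"
  have "?p < ?p' \<or> (?p = ?p' \<and> i mod (k+1) < i' mod (k+1))"
  proof (cases "?p = ?p'")
    case True
    then show ?thesis using ii by (metis add_less_cancel_left div_mult_mod_eq)
  qed (use ii div_le_mono[of i i' "k+1"] in simp)
  then show "lexless (grid_point k ?p (i mod (k+1))) (grid_point k ?p' (i' mod (k+1)))"
    using assms by (auto simp: lexless_def grid_point_def divide_strict_right_mono)
qed

lemma set_grid_list: "set (grid_list k) = Sgrid k"
proof (intro equalityI subsetI)
  fix z assume "z \<in> set (grid_list k)"
  then obtain i where "i < (k+1)*(k+1)" "z = grid_point k (i div (k+1)) (i mod (k+1))"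
    unfolding grid_list_def set_map set_upt by auto
  moreover from this have "i div (k+1) \<le> k" "i mod (k+1) \<le> k"
    by (simp_all add: less_mult_imp_div_less less_Suc_eq_le[symmetric])
  ultimately show "z \<in> Sgrid k" unfolding Sgrid_def grid_point_def by blast
next
  fix z assume "z \<in> Sgrid k"
  then obtain p q where pq: "p \<le> k" "q \<le> k" "z = grid_point k p q"
    by (auto simp: Sgrid_def grid_point_def)
  have "p*(k+1)+q < (p+1)*(k+1)" using pq by simp
  also have "\<dots> \<le> (k+1)*(k+1)" using pq by (intro mult_right_mono) auto
  finally have "p*(k+1)+q \<in> set [0..<(k+1)*(k+1)]"
    by (simp only: set_upt atLeastLessThan_iff) simp
  moreover have "z = grid_point k ((p*(k+1)+q) div (k+1)) ((p*(k+1)+q) mod (k+1))"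
    using pq mult_add_div_mod_eq[of q k p] by simp
  ultimately show "z \<in> set (grid_list k)"
    unfolding grid_list_def set_map by (rule rev_image_eqI)
qed

lemma Slist_eq_grid_list: "k \<ge> 1 \<Longrightarrow> Slist k = grid_list k"
  unfolding Slist_def
  by (rule the_equality) (use sorted_grid_list set_grid_list sorted_lexless_unique in auto)

lemma kk_bounds:
  assumes "n \<ge> 2"
  shows "kk n \<ge> 1" "n \<le> (kk n + 1) * (kk n + 1)" "real (kk n) * real (kk n) \<le> real n"
proof -
  define s where "s = sqrt (real n)"
  have s1: "s > 1" using assms by (simp add: s_def)
  have cs1: "s \<le> of_int \<lceil>s\<rceil>" and cs2: "of_int \<lceil>s\<rceil> \<le> s + 1"
    by (rule le_of_int_ceiling, rule of_int_ceiling_le_add_one)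
  then have c2: "\<lceil>s\<rceil> \<ge> 2" using s1 by linarith
  then have "nat \<lceil>s\<rceil> \<ge> 1" by arith
  then have kdef: "real (kk n) = of_int \<lceil>s\<rceil> - 1"
    unfolding kk_def s_def[symmetric] using c2 by simp
  then have "real (kk n) \<ge> 1" using c2 by simp
  then show k1: "kk n \<ge> 1" by simp
  have ss: "real n = s * s" using s_def by simp
  have "s * s \<le> (real (kk n) + 1) * (real (kk n) + 1)"
    using cs1 kdef s1 by (intro mult_mono) auto
  then have "real n \<le> real ((kk n + 1) * (kk n + 1))"
    unfolding ss by (simp only: of_nat_mult of_nat_add of_nat_1)
  then show "n \<le> (kk n + 1) * (kk n + 1)" by (simp only: of_nat_le_iff)
  have "real (kk n) * real (kk n) \<le> s * s"
    using cs2 kdef k1 s1 by (intro mult_mono) auto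
  then show "real (kk n) * real (kk n) \<le> real n" using ss by simp
qed

lemma zz_eq_grid_point:
  assumes "n \<ge> 2" "i < n"
  shows "zz n i = grid_point (kk n) (i div (kk n + 1)) (i mod (kk n + 1))"
proof -
  have "i < (kk n + 1) * (kk n + 1)" using assms kk_bounds(2)[OF assms(1)] by linarith
  then show ?thesis
    using kk_bounds(1)[OF assms(1)]
    by (simp add: zz_def Slist_eq_grid_list grid_list_def del: upt_Suc)
qed

lemma zz_eq_grid_point_divmod:
  assumes "n \<ge> 2" "q \<le> kk n" "p*(kk n+1)+q < n"
  shows "zz n (p*(kk n+1)+q) = grid_point (kk n) p q"
  using zz_eq_grid_point[OF assms(1,3)] mult_add_div_mod_eq[OF assms(2)] by simp

lemma dist_grid_point_Suc_right: "dist (grid_point k p (q+1)) (grid_point k p q) = 2 / real k"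
proof -
  have "grid_point k p (q+1) - grid_point k p q = Complex 0 (2 / real k)"
    by (simp add: grid_point_def complex_eq_iff add_divide_distrib diff_divide_distrib)
  then show ?thesis by (simp add: dist_norm complex_norm)
qed

lemma dist_grid_point_Suc_left: "dist (grid_point k (p+1) q) (grid_point k p q) = 2 / real k"
proof -
  have "grid_point k (p+1) q - grid_point k p q = Complex (2 / real k) 0"
    by (simp add: grid_point_def complex_eq_iff add_divide_distrib diff_divide_distrib)
  then show ?thesis by (simp add: dist_norm complex_norm)
qed

lemma dist_grid_point_ge:
  assumes "k \<ge> 1" "(p, q) \<noteq> (p', q')"
  shows "2 / real k \<le> dist (grid_point k p q) (grid_point k p' q')"
proof -
  have Re: "Re (grid_point k p q - grid_point k p' q') = 2 * (real p - real p') / real k"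
    and Im: "Im (grid_point k p q - grid_point k p' q') = 2 * (real q - real q') / real k"
    by (simp_all add: grid_point_def diff_divide_distrib)
  have "\<bar>real p - real p'\<bar> \<ge> 1 \<or> \<bar>real q - real q'\<bar> \<ge> 1" using assms(2) by auto
  then have "2 / real k \<le> \<bar>Re (grid_point k p q - grid_point k p' q')\<bar>
           \<or> 2 / real k \<le> \<bar>Im (grid_point k p q - grid_point k p' q')\<bar>"
    unfolding Re Im using assms(1) by (auto simp: abs_mult divide_right_mono)
  then show ?thesis
    unfolding dist_norm using abs_Re_le_cmod abs_Im_le_cmod order_trans by blast
qed

lemma dist_zz_ge:
  assumes "n \<ge> 2" "i < n" "j < n" "i \<noteq> j"
  shows "2 / real (kk n) \<le> dist (zz n i) (zz n j)"
proof -
  let ?k = "kk n"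
  have "(i div (?k+1), i mod (?k+1)) \<noteq> (j div (?k+1), j mod (?k+1))"
    using assms(4) by (metis div_mod_decomp prod.inject)
  then show ?thesis using zz_eq_grid_point[OF assms(1,2)] zz_eq_grid_point[OF assms(1,3)]
      dist_grid_point_ge kk_bounds(1)[OF assms(1)] by simp
qed

lemma zz_nearest_neighbour:
  assumes n: "n \<ge> 2" and j: "j < n"
  shows "\<exists>i<n. i \<noteq> j \<and> dist (zz n i) (zz n j) = 2 / real (kk n)"
proof -
  let ?k = "kk n"
  define p where "p = j div (?k+1)"
  define q where "q = j mod (?k+1)"
  have jpq: "j = p*(?k+1)+q" unfolding p_def q_def by (rule div_mult_mod_eq[symmetric])
  have qk: "q \<le> ?k" unfolding q_def using less_Suc_eq_le by simp
  have zj: "zz n j = grid_point ?k p q"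
    using zz_eq_grid_point_divmod[OF n qk, of p] j jpq by simp
  consider "q \<ge> 1" | "q = 0" "p \<ge> 1" | "j = 0" using jpq by fastforce
  then show ?thesis
  proof cases
    case 1
    define i where "i = p*(?k+1)+(q-1)"
    have "i < j" using 1 unfolding i_def jpq by simp
    moreover have "zz n i = grid_point ?k p (q-1)"
      using zz_eq_grid_point_divmod[OF n, of "q-1" p] qk \<open>i < j\<close> j by (simp add: i_def)
    moreover have "grid_point ?k p q = grid_point ?k p ((q-1)+1)" using 1 by simp
    ultimately show ?thesis
      using j zj dist_grid_point_Suc_right[of ?k p "q-1"] by (metis dist_commute less_trans less_irrefl)
  next
    case 2
    define i where "i = (p-1)*(?k+1)"
    have "i < j" using 2 unfolding i_def jpq by (cases p) auto
    moreover have "zz n i = grid_point ?k (p-1) 0"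
      using zz_eq_grid_point_divmod[OF n, of 0 "p-1"] \<open>i < j\<close> j by (simp add: i_def)
    moreover have "grid_point ?k p q = grid_point ?k ((p-1)+1) 0" using 2 by simp
    ultimately show ?thesis
      using j zj dist_grid_point_Suc_left[of ?k "p-1" 0] by (metis dist_commute less_trans less_irrefl)
  next
    case 3
    have "zz n 1 = grid_point ?k 0 (0+1)"
      using zz_eq_grid_point_divmod[OF n, of 1 0] kk_bounds(1)[OF n] n by simp
    moreover have "p = 0" "q = 0" using 3 jpq by simp_all
    moreover have "1 < n" using n by simp
    ultimately show ?thesis
      using 3 zj dist_grid_point_Suc_right[of ?k 0 0] by auto
  qed
qed

lemma norm_grid_point_le:
  assumes "k \<ge> 1" "p \<le> k" "q \<le> k"
  shows "(cmod (grid_point k p q))\<^sup>2 \<le> 2"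
proof -
  have "\<bar>-1 + 2 * real m / real k\<bar> \<le> 1" if "m \<le> k" for m
  proof -
    have "real m / real k \<le> 1" using that assms(1) by simp
    then show ?thesis by (simp add: abs_le_iff)
  qed
  then have "(-1 + 2 * real p / real k)\<^sup>2 \<le> 1" "(-1 + 2 * real q / real k)\<^sup>2 \<le> 1"
    using assms by (simp_all add: abs_square_le_1)
  then show ?thesis by (simp add: grid_point_def cmod_power2)
qed

lemma norm_grid_point_ge:
  assumes "k \<ge> 1" "4 * p \<le> k"
  shows "1/4 \<le> (cmod (grid_point k p q))\<^sup>2"
proof -
  have "2 * real p / real k \<le> 1/2" using assms by (simp add: field_simps)
  then have "1/2 \<le> -(-1 + 2 * real p / real k)" by linarith
  then have "(1/2)\<^sup>2 \<le> (-(-1 + 2 * real p / real k))\<^sup>2"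
    by (rule power_mono) simp
  then have "1/4 \<le> (-1 + 2 * real p / real k)\<^sup>2"
    unfolding power2_minus by (simp add: power_divide)
  moreover have "(cmod (grid_point k p q))\<^sup>2 = (-1 + 2 * real p / real k)\<^sup>2 + (-1 + 2 * real q / real k)\<^sup>2"
    by (simp only: grid_point_def cmod_power2 complex.sel)
  ultimately show ?thesis using zero_le_power2[of "-1 + 2 * real q / real k"] by linarith
qed

lemma sum_norm_zz_le:
  assumes n: "n \<ge> 2"
  shows "(\<Sum>i<n. (cmod (zz n i))\<^sup>2) \<le> 2 * real n"
proof -
  let ?k = "kk n"
  have "(cmod (zz n i))\<^sup>2 \<le> 2" if "i < n" for i
  proof -
    have "i < (?k+1)*(?k+1)" using that kk_bounds(2)[OF n] by linarith
    then have "i div (?k+1) \<le> ?k" "i mod (?k+1) \<le> ?k"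
      by (simp_all add: less_mult_imp_div_less less_Suc_eq_le[symmetric])
    then show ?thesis
      using zz_eq_grid_point[OF n that] norm_grid_point_le[OF kk_bounds(1)[OF n]] by simp
  qed
  then have "(\<Sum>i<n. (cmod (zz n i))\<^sup>2) \<le> (\<Sum>i<n. 2)" by (intro sum_mono) simp
  then show ?thesis by simp
qed

lemma sum_norm_zz_ge:
  assumes n: "n \<ge> 2"
  shows "real n / 16 \<le> (\<Sum>i<n. (cmod (zz n i))\<^sup>2)"
proof -
  let ?k = "kk n"
  define B where "B = {i. i < n \<and> 4 * (i div (?k+1)) \<le> ?k}"
  define X where "X = (?k div 4 + 1) * (?k+1)"
  have "{..<min n X} \<subseteq> B"
  proof
    fix i assume "i \<in> {..<min n X}"
    then have "i < n" "i div (?k+1) < ?k div 4 + 1"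
      by (auto simp: X_def less_mult_imp_div_less)
    then show "i \<in> B" by (simp add: B_def)
  qed
  then have "min n X \<le> card B" by (metis B_def card_lessThan card_mono finite_Collect_conjI finite_Collect_less_nat)
  moreover have "n \<le> 4 * X"
  proof -
    have "?k + 1 \<le> 4 * (?k div 4 + 1)" by presburger
    then have "(?k+1)*(?k+1) \<le> 4 * (?k div 4 + 1) * (?k+1)" by (rule mult_right_mono) simp
    from le_trans[OF kk_bounds(2)[OF n] this] show ?thesis by (simp only: X_def mult.assoc)
  qed
  ultimately have "real n \<le> 4 * real (card B)" by linarith
  moreover have "(\<Sum>i\<in>B. 1/4) \<le> (\<Sum>i\<in>B. (cmod (zz n i))\<^sup>2)"
    using zz_eq_grid_point[OF n] norm_grid_point_ge[OF kk_bounds(1)[OF n]]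
    by (intro sum_mono) (simp add: B_def)
  moreover have "(\<Sum>i\<in>B. (cmod (zz n i))\<^sup>2) \<le> (\<Sum>i<n. (cmod (zz n i))\<^sup>2)"
    by (rule sum_mono2) (auto simp: B_def)
  ultimately show ?thesis by simp
qed

lemma mu_Dmat_eq:
  assumes n: "n \<ge> 2" and j: "j < n"
  shows "mu n (Dmat n) (zz n j) (ebasis j)
       = ereal (sqrt (\<Sum>i<n. (cmod (zz n i))\<^sup>2) * real (kk n) / 2)"
proof -
  have "Dmat n = diag_mat n (zz n)" by (simp add: Dmat_def diag_mat_def)
  moreover obtain i0 where "i0 < n" "i0 \<noteq> j" "dist (zz n i0) (zz n j) = 2 / real (kk n)"
    using zz_nearest_neighbour[OF n j] by blast
  moreover have "2 / real (kk n) > 0" using kk_bounds(1)[OF n] by simp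
  ultimately show ?thesis
    using mu_diag_mat[of j n "2 / real (kk n)" "zz n", OF j _ dist_zz_ge[OF n _ j]]
      frob_diag_mat[of n "zz n"]
    by simp
qed

lemma mu_Dmat_bounds:
  assumes n: "n \<ge> 2" and j: "j < n"
  shows "ereal (real n / 16) \<le> mu n (Dmat n) (zz n j) (ebasis j)"
    and "mu n (Dmat n) (zz n j) (ebasis j) \<le> ereal (real n)"
proof -
  define k where "k = real (kk n)"
  define \<Sigma> where "\<Sigma> = (\<Sum>i<n. (cmod (zz n i))\<^sup>2)"
  have "real n \<le> real ((kk n + 1) * (kk n + 1))"
    using kk_bounds(2)[OF n] by (simp only: of_nat_le_iff)
  then have k: "k \<ge> 1" "k * k \<le> real n" "real n \<le> (k+1)*(k+1)"
    using kk_bounds(1,3)[OF n] by (simp_all add: k_def algebra_simps)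
  have \<Sigma>: "real n / 16 \<le> \<Sigma>" "\<Sigma> \<le> 2 * real n"
    unfolding \<Sigma>_def using sum_norm_zz_ge[OF n] sum_norm_zz_le[OF n] by simp_all
  have sq: "(sqrt \<Sigma> * k / 2)\<^sup>2 = \<Sigma> * (k * k) / 4"
    using \<Sigma> by (simp add: power_mult_distrib power_divide power2_eq_square)
  have "\<Sigma> * (k * k) \<le> (2 * real n) * real n"
    using \<Sigma> k by (intro mult_mono) auto
  then have "(sqrt \<Sigma> * k / 2)\<^sup>2 \<le> (real n)\<^sup>2"
    unfolding sq power2_eq_square[of "real n"] using zero_le_square[of "real n"] by linarith
  then have "sqrt \<Sigma> * k / 2 \<le> real n" by (rule power2_le_imp_le) simp
  moreover have "(k+1)*(k+1) \<le> (2*k)*(2*k)" using k(1) by (intro mult_mono) auto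
  then have "(real n / 16) * (real n / 4) \<le> \<Sigma> * (k * k)"
    using \<Sigma> k by (intro mult_mono) auto
  then have "(real n / 16)\<^sup>2 \<le> (sqrt \<Sigma> * k / 2)\<^sup>2"
    unfolding sq by (simp add: power2_eq_square)
  then have "real n / 16 \<le> sqrt \<Sigma> * k / 2" by (rule power2_le_imp_le) (use \<Sigma> k in simp)
  ultimately show "ereal (real n / 16) \<le> mu n (Dmat n) (zz n j) (ebasis j)"
    and "mu n (Dmat n) (zz n j) (ebasis j) \<le> ereal (real n)"
    using mu_Dmat_eq[OF n j] by (simp_all add: k_def \<Sigma>_def)
qed

theorem lemma2p20:
  shows "\<exists>c C :: real. c > 0 \<and> C > 0 \<and>
    (\<forall>n\<ge>2. \<forall>j<n.
        ereal (c * real n) \<le> mu n (Dmat n) (zz n j) (ebasis j) \<and>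
        mu n (Dmat n) (zz n j) (ebasis j) \<le> ereal (C * real n))"
proof (intro exI conjI allI impI)
  fix n j :: nat assume "n \<ge> 2" "j < n"
  then show "ereal (1/16 * real n) \<le> mu n (Dmat n) (zz n j) (ebasis j)"
    and "mu n (Dmat n) (zz n j) (ebasis j) \<le> ereal (1 * real n)"
    using mu_Dmat_bounds by simp_all
qed simp_all

end
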